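(* Let $(a_1,a_2)\in\mathbb{Z}^2$ and let $x=x_1^{-a_1}x_2^{-a_2}\sum_{p,q\ge0}c(p,q)x_1^px_2^q\in\mathcal{T}_1$ be pointed at $(a_1,a_2)$, and suppose $x\in\mathcal{T}_0^{\ge0}\cap\mathcal{T}_1^{\ge0}\cap\mathcal{T}_2^{\ge0}$. Then for all $(p,q)\in\mathbb{Z}_{\ge0}^2$ the following inequality holds in $\Bbbk$: $$c(p,q)\ge\max\Big(\Big[\sum_{k=1}^p\sum_{(k_1,\ldots,k_{d_2})\vdash k}(-1)^{k-1}c(p-k_1-2k_2-\cdots-d_2k_{d_2},q)\varrho_1^{k_1}\cdots\varrho_{d_2}^{k_{d_2}}\binom{a_2-q+k-1}{a_2-q-1,k_1,\ldots,k_{d_2}}\Big]_+,$$ $$\Big[\sum_{\ell=1}^q\sum_{(\ell_1,\ldots,\ell_{d_1})\vdash\ell}(-1)^{\ell-1}c(p,q-\ell_1-2\ell_2-\cdots-d_1\ell_{d_1})\rho_1^{\ell_1}\cdots\rho_{d_1}^{\ell_{d_1}}\binom{a_1-p+\ell-1}{a_1-p-1,\ell_1,\ldots,\ell_{d_1}}\Big]_+\Big).$$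
   Context: $\Bbbk$ is an ordered field with positive cone $\Pi$ ($a\le b$ iff $b-a\in\Pi$), $[a]_+=\max(a,0)$. $P_1(z)=\sum_{t=0}^{d_1}\rho_tz^t$ and $P_2(z)=\sum_{t=0}^{d_2}\varrho_tz^t$ in $\Pi[z]$ are monic palindromic ($P(z)=z^dP(z^{-1})$, $d=\deg P$). With $x_1,x_2$ commuting indeterminates, define $x_k\in\Bbbk(x_1,x_2)$ for $k\in\mathbb{Z}$ by $x_{k+1}x_{k-1}=P_1(x_k)$ if $k$ even, $=P_2(x_k)$ if $k$ odd. $\underline\Bbbk$ is the $\mathbb{Z}$-subalgebra of $\Bbbk$ generated by the coefficients of $P_1,P_2$, $\underline\Bbbk_{\ge0}=\underline\Bbbk\cap\Pi$, $\mathcal{T}_k=\underline\Bbbk[x_k^{\pm1},x_{k+1}^{\pm1}]$, $\mathcal{T}_k^{\ge0}=\underline\Bbbk_{\ge0}[x_k^{\pm1},x_{k+1}^{\pm1}]$. Pointed at $(a_1,a_2)$ means $c(p,q)\in\underline\Bbbk$ and $c(0,0)=1$; set $c(p,q)=0$ if $p<0$ or $q<0$. Multinomial convention: for integers $n,k_0$ and $k_1,\dots,k_r\ge0$ with $k=\sum_{i\ge1}k_i$ and $n=k_0+k$, $\binom{n}{k_0,k_1,\dots,k_r}=\binom{n}{k}\frac{k!}{k_1!\cdots k_r!}$ with $\binom{n}{k}=n(n-1)\cdots(n-k+1)/k!$; $(k_1,\dots,k_r)\vdash k$ means nonnegative integers summing to $k$. *)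

theory Defs
  imports "HOL-Computational_Algebra.Polynomial" "HOL-Computational_Algebra.Fraction_Field"
begin

text \<open>Rational function field k(x1,x2) is rendered as the fraction field of k[x1][x2].
  The constant embedding of k, and the two indeterminates.\<close>

type_synonym 'a ratfun2 = "'a poly poly fract"

definition rf_const :: "'a::idom \<Rightarrow> 'a ratfun2" where
  "rf_const c = Fract [:[:c:]:] 1"

definition rf_x1 :: "'a::idom ratfun2" where
  "rf_x1 = Fract [:[:0, 1:]:] 1"

definition rf_x2 :: "'a::idom ratfun2" where
  "rf_x2 = Fract [:0, 1:] 1"

definition monic_palindromic_pos :: "'a::linordered_field poly \<Rightarrow> bool" where
  "monic_palindromic_pos P \<longleftrightarrow> lead_coeff P = 1 \<and> (\<forall>i. coeff P i \<ge> 0) \<and>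
     (\<forall>i\<le>degree P. coeff P i = coeff P (degree P - i))"

text \<open>Forward / backward iteration of the recurrence
  x_{k+1} x_{k-1} = P1(x_k) (k even), P2(x_k) (k odd), starting from u = x_1, v = x_2.
  clus_fwd n = (x_{n+1}, x_{n+2}),  clus_bwd n = (x_{1-n}, x_{2-n}).\<close>
fun clus_fwd :: "'a::field poly \<Rightarrow> 'a poly \<Rightarrow> 'a \<Rightarrow> 'a \<Rightarrow> nat \<Rightarrow> 'a \<times> 'a" where
  "clus_fwd P1 P2 u v 0 = (u, v)"
| "clus_fwd P1 P2 u v (Suc n) =
     (case clus_fwd P1 P2 u v n of (a, b) \<Rightarrow> (b, poly (if even n then P1 else P2) b / a))"

fun clus_bwd :: "'a::field poly \<Rightarrow> 'a poly \<Rightarrow> 'a \<Rightarrow> 'a \<Rightarrow> nat \<Rightarrow> 'a \<times> 'a" where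
  "clus_bwd P1 P2 u v 0 = (u, v)"
| "clus_bwd P1 P2 u v (Suc n) =
     (case clus_bwd P1 P2 u v n of (a, b) \<Rightarrow> (poly (if odd n then P1 else P2) a / b, a))"

definition clus_seq :: "'a::field poly \<Rightarrow> 'a poly \<Rightarrow> 'a \<Rightarrow> 'a \<Rightarrow> int \<Rightarrow> 'a" where
  "clus_seq P1 P2 u v k =
     (if k \<ge> 1 then fst (clus_fwd P1 P2 u v (nat (k - 1)))
      else fst (clus_bwd P1 P2 u v (nat (1 - k))))"

definition xvar :: "'a::linordered_field poly \<Rightarrow> 'a poly \<Rightarrow> int \<Rightarrow> 'a ratfun2" where
  "xvar P1 P2 k = clus_seq (map_poly rf_const P1) (map_poly rf_const P2) rf_x1 rf_x2 k"

inductive_set coeff_alg :: "'a::linordered_field poly \<Rightarrow> 'a poly \<Rightarrow> 'a set"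
  for P1 P2 where
  one: "1 \<in> coeff_alg P1 P2"
| c1: "coeff P1 i \<in> coeff_alg P1 P2"
| c2: "coeff P2 i \<in> coeff_alg P1 P2"
| add: "a \<in> coeff_alg P1 P2 \<Longrightarrow> b \<in> coeff_alg P1 P2 \<Longrightarrow> a + b \<in> coeff_alg P1 P2"
| neg: "a \<in> coeff_alg P1 P2 \<Longrightarrow> - a \<in> coeff_alg P1 P2"
| mult: "a \<in> coeff_alg P1 P2 \<Longrightarrow> b \<in> coeff_alg P1 P2 \<Longrightarrow> a * b \<in> coeff_alg P1 P2"

definition coeff_alg_nonneg :: "'a::linordered_field poly \<Rightarrow> 'a poly \<Rightarrow> 'a set" where
  "coeff_alg_nonneg P1 P2 = coeff_alg P1 P2 \<inter> {c. c \<ge> 0}"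

definition in_laurent :: "'a::linordered_field poly \<Rightarrow> 'a poly \<Rightarrow> 'a set \<Rightarrow> int \<Rightarrow> 'a ratfun2 \<Rightarrow> bool" where
  "in_laurent P1 P2 R k y \<longleftrightarrow>
     (\<exists>f :: int \<times> int \<Rightarrow> 'a. finite {e. f e \<noteq> 0} \<and> (\<forall>e. f e \<in> R) \<and>
        y = (\<Sum>(i, j)\<in>{e. f e \<noteq> 0}.
               rf_const (f (i, j)) * xvar P1 P2 k powi i * xvar P1 P2 (k + 1) powi j))"

definition cext :: "(nat \<Rightarrow> nat \<Rightarrow> 'a::zero) \<Rightarrow> int \<Rightarrow> int \<Rightarrow> 'a" where
  "cext c p q = (if p < 0 \<or> q < 0 then 0 else c (nat p) (nat q))"

definition compositions :: "nat \<Rightarrow> nat \<Rightarrow> (nat \<Rightarrow> nat) set" where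
  "compositions r k = {ks. (\<forall>i. i \<notin> {1..r} \<longrightarrow> ks i = 0) \<and> (\<Sum>i=1..r. ks i) = k}"

text \<open>Multinomial (n; n-k, k_1,...,k_r) = binom(n,k) * k!/(k_1!...k_r!), k = sum k_i.\<close>
definition multinom :: "int \<Rightarrow> nat \<Rightarrow> (nat \<Rightarrow> nat) \<Rightarrow> 'a::field_char_0" where
  "multinom n r ks = (let k = (\<Sum>i=1..r. ks i) in
     ((of_int n :: 'a) gchoose k) * (fact k / (\<Prod>i=1..r. fact (ks i))))"

definition pos_part :: "'a::linordered_field \<Rightarrow> 'a" where
  "pos_part a = max a 0"

end

theory Submission
  imports Defs "HOL-Computational_Algebra.Polynomial_FPS" "HOL-Computational_Algebra.Polynomial_Factorial"
begin

text \<open>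
  Multiplying the three Laurent expansions of \<open>x\<close> by a high power of \<open>x\<^sub>1 x\<^sub>2 P(x\<^sub>i)\<close> turns
  them into polynomial identities in \<open>x\<^sub>1, x\<^sub>2\<close>.  The expansion in \<open>(x\<^sub>1, x\<^sub>2)\<close> gives
  \<open>c(p,q) \<ge> 0\<close> at once.  In the expansion in \<open>(x\<^sub>0, x\<^sub>1)\<close>, where \<open>x\<^sub>0 = P\<^sub>2(x\<^sub>1)/x\<^sub>2\<close>,
  the coefficient of \<open>x\<^sub>2\<^bsup>q - a\<^sub>2\<^esup>\<close> shows that
  \<open>(\<Sum>\<^sub>p c(p,q) x\<^sub>1\<^sup>p) \<cdot> P\<^sub>2(x\<^sub>1)\<^bsup>-(a\<^sub>2 - q)\<^esup>\<close> is, up to a power of \<open>x\<^sub>1\<close>, a polynomial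
  with nonnegative coefficients.  Writing \<open>P\<^sub>2 = 1 + Q\<close> with \<open>Q(0) = 0\<close> and expanding
  \<open>(1 + Q)\<^bsup>-(a\<^sub>2 - q)\<^esup>\<close> by the binomial and multinomial theorems, the \<open>p\<close>-th coefficient of
  this series is \<open>c(p,q)\<close> minus the first sum of the statement.  The expansion in
  \<open>(x\<^sub>2, x\<^sub>3)\<close>, where \<open>x\<^sub>3 = P\<^sub>1(x\<^sub>2)/x\<^sub>1\<close>, gives the second sum in the same way.
\<close>

unbundle fps_syntax

section \<open>Multinomial expansion\<close>

lemma finite_compositions: "finite (compositions r k)"
proof (rule finite_subset)
  show "compositions r k \<subseteq> {ks. \<forall>i. (i \<in> {1..r} \<longrightarrow> ks i \<in> {0..k}) \<and> (i \<notin> {1..r} \<longrightarrow> ks i = 0)}"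
    by (auto simp: compositions_def simp del: atLeastAtMost_iff)
      (simp add: member_le_sum)
  show "finite \<dots>"
    by (rule finite_set_of_finite_funs) simp_all
qed

lemma compositions_0_right: "compositions r 0 = {\<lambda>_. 0}"
  by (auto simp: compositions_def fun_eq_iff) (metis atLeastAtMost_iff)

lemma compositions_Suc_bij:
  "bij_betw (\<lambda>(t, ks). ks(Suc r := t)) (SIGMA t:{..k}. compositions r (k - t)) (compositions (Suc r) k)"
proof (rule bij_betw_byWitness[where f' = "\<lambda>ks. (ks (Suc r), ks(Suc r := 0))"])
  have upd: "(\<Sum>i=1..r. (ks(Suc r := t)) i) = (\<Sum>i=1..r. ks i)" for ks :: "nat \<Rightarrow> nat" and t
    by (rule sum.cong) auto
  show "(\<lambda>(t, ks). ks(Suc r := t)) ` (SIGMA t:{..k}. compositions r (k - t)) \<subseteq> compositions (Suc r) k"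
    by (clarsimp simp: compositions_def upd) (metis atLeastAtMost_iff le_Suc_eq)
  show "(\<lambda>ks. (ks (Suc r), ks(Suc r := 0))) ` compositions (Suc r) k \<subseteq> (SIGMA t:{..k}. compositions r (k - t))"
    by (clarsimp simp: compositions_def upd) (auto simp: le_Suc_eq)
qed (auto simp: compositions_def fun_eq_iff)

definition multinomial_coeff :: "nat \<Rightarrow> (nat \<Rightarrow> nat) \<Rightarrow> 'a::field_char_0" where
  "multinomial_coeff r ks = fact (\<Sum>i=1..r. ks i) / (\<Prod>i=1..r. fact (ks i))"

definition weight :: "nat \<Rightarrow> (nat \<Rightarrow> nat) \<Rightarrow> nat" where
  "weight r ks = (\<Sum>i=1..r. i * ks i)"

lemma power_sum_monom_multinomial:
  fixes \<rho> :: "nat \<Rightarrow> 'a::field_char_0"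
  shows "(\<Sum>i=1..r. monom (\<rho> i) i) ^ k =
    (\<Sum>ks\<in>compositions r k. monom (multinomial_coeff r ks * (\<Prod>i=1..r. \<rho> i ^ ks i)) (weight r ks))"
proof (induction r arbitrary: k)
  case 0
  have "compositions 0 k = (if k = 0 then {\<lambda>_. 0} else {})"
    by (auto simp: compositions_def)
  then show ?case
    by (simp add: multinomial_coeff_def weight_def)
next
  case (Suc r)
  define mon where "mon r ks = monom (multinomial_coeff r ks * (\<Prod>i=1..r. \<rho> i ^ ks i) :: 'a) (weight r ks)"
    for r ks
  have step: "of_nat (k choose t) * monom (\<rho> (Suc r)) (Suc r) ^ t * mon r ks = mon (Suc r) (ks(Suc r := t))"
    if "t \<le> k" "ks \<in> compositions r (k - t)" for t ks
  proof -
    have sum_ks: "(\<Sum>i=1..r. ks i) = k - t"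
      using that(2) by (simp add: compositions_def)
    have upd: "(\<Sum>i=1..r. g i ((ks(Suc r := t)) i)) = (\<Sum>i=1..r. g i (ks i))"
      "(\<Prod>i=1..r. h i ((ks(Suc r := t)) i)) = (\<Prod>i=1..r. h i (ks i))"
      for g :: "nat \<Rightarrow> nat \<Rightarrow> nat" and h :: "nat \<Rightarrow> nat \<Rightarrow> 'a"
      by (auto intro: sum.cong prod.cong)
    have sum_upd: "(\<Sum>i=1..Suc r. (ks(Suc r := t)) i) = k"
      using that(1) sum_ks by (simp add: sum.cl_ivl_Suc upd)
    have "multinomial_coeff (Suc r) (ks(Suc r := t)) = (fact k / ((\<Prod>i=1..r. fact (ks i)) * fact t) :: 'a)"
      by (simp only: multinomial_coeff_def sum_upd) (simp add: prod.cl_ivl_Suc upd)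
    also have "\<dots> = of_nat (k choose t) * multinomial_coeff r ks"
      using sum_ks by (simp add: multinomial_coeff_def binomial_fact[OF that(1)])
    finally have "multinomial_coeff (Suc r) (ks(Suc r := t)) = of_nat (k choose t) * (multinomial_coeff r ks :: 'a)" .
    moreover have "weight (Suc r) (ks(Suc r := t)) = Suc r * t + weight r ks"
      by (simp add: weight_def sum.cl_ivl_Suc upd)
    ultimately show ?thesis
      by (simp add: mon_def prod.cl_ivl_Suc upd monom_power mult_monom of_nat_poly smult_monom ac_simps)
  qed
  have "(\<Sum>i=1..Suc r. monom (\<rho> i) i) ^ k
      = (\<Sum>t\<le>k. of_nat (k choose t) * monom (\<rho> (Suc r)) (Suc r) ^ t * (\<Sum>i=1..r. monom (\<rho> i) i) ^ (k - t))"
    by (simp add: add.commute binomial_ring)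
  also have "\<dots> = (\<Sum>(t, ks)\<in>(SIGMA t:{..k}. compositions r (k - t)).
       of_nat (k choose t) * monom (\<rho> (Suc r)) (Suc r) ^ t * mon r ks)"
    by (simp only: Suc.IH mon_def sum_distrib_left) (simp add: sum.Sigma finite_compositions)
  also have "\<dots> = (\<Sum>(t, ks)\<in>(SIGMA t:{..k}. compositions r (k - t)). mon (Suc r) (ks(Suc r := t)))"
    by (rule sum.cong) (auto intro: step)
  also have "\<dots> = (\<Sum>ks\<in>compositions (Suc r) k. mon (Suc r) ks)"
    using sum.reindex_bij_betw[OF compositions_Suc_bij] by (simp add: case_prod_unfold)
  finally show ?case
    by (simp add: mon_def)
qed

section \<open>Coefficients of \<open>g \<cdot> P\<^bsup>-n\<^esup>\<close>\<close>

text \<open>By \<open>neg_binomial_sum_eq\<close>, \<open>g(p)\<close> minus this sum is the \<open>p\<close>-th coefficient of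
  \<open>g \<cdot> P\<^bsup>-n\<^esup>\<close> when \<open>P(0) = 1\<close>.\<close>

definition neg_binomial_sum :: "'a::field_char_0 poly \<Rightarrow> int \<Rightarrow> (int \<Rightarrow> 'a) \<Rightarrow> nat \<Rightarrow> 'a" where
  "neg_binomial_sum P n g p = (\<Sum>k=1..p. \<Sum>ks\<in>compositions (degree P) k.
     (-1) ^ (k - 1) * g (int p - int (weight (degree P) ks))
     * (\<Prod>i=1..degree P. coeff P i ^ ks i) * multinom (n + int k - 1) (degree P) ks)"

lemma neg_binomial_sum_eq:
  fixes P :: "'a::field_char_0 poly"
  shows "g (int p) - neg_binomial_sum P n g p =
    (\<Sum>k=0..p. (of_int (- n) gchoose k) * (\<Sum>ks\<in>compositions (degree P) k.
       g (int p - int (weight (degree P) ks)) * (multinomial_coeff (degree P) ks * (\<Prod>i=1..degree P. coeff P i ^ ks i))))"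
proof -
  define d where "d = degree P"
  have "(-1) ^ (k - 1) * g (int p - int (weight d ks)) * (\<Prod>i=1..d. coeff P i ^ ks i)
          * multinom (n + int k - 1) d ks
      = - ((of_int (- n) gchoose k) * (g (int p - int (weight d ks)) * (multinomial_coeff d ks * (\<Prod>i=1..d. coeff P i ^ ks i))))"
    if "1 \<le> k" "ks \<in> compositions d k" for k ks
  proof -
    have "(\<Sum>i=1..d. ks i) = k"
      using that(2) by (simp add: compositions_def)
    moreover have "(of_int (- n) :: 'a) gchoose k = (-1) ^ k * ((of_int n + of_nat k - 1) gchoose k)"
      using gbinomial_minus[of "of_int n :: 'a"] by simp
    moreover have "(-1 :: 'a) ^ (k - 1) = - ((-1) ^ k)"
      using that(1) by (cases k) auto
    ultimately show ?thesis
      by (simp add: multinom_def multinomial_coeff_def Let_def ac_simps)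
  qed
  then have "neg_binomial_sum P n g p = - (\<Sum>k=1..p. (of_int (- n) gchoose k) * (\<Sum>ks\<in>compositions d k.
       g (int p - int (weight d ks)) * (multinomial_coeff d ks * (\<Prod>i=1..d. coeff P i ^ ks i))))"
    by (simp add: neg_binomial_sum_def d_def[symmetric] sum_distrib_left sum_negf)
  then show ?thesis
    by (simp add: sum.atLeast_Suc_atMost compositions_0_right weight_def multinomial_coeff_def d_def)
qed

lemma fps_binomial_of_nat_compose:
  fixes Q :: "'a::field_char_0 fps"
  assumes "Q $ 0 = 0"
  shows "fps_binomial (of_nat m) oo Q = (1 + Q) ^ m"
  by (simp add: fps_binomial_of_nat fps_compose_power[OF assms, symmetric] fps_compose_add_distrib assms)

lemma coeff_mult_binomial_compose:
  fixes A :: "'a::field_char_0 fps" and \<rho> :: "nat \<Rightarrow> 'a"  and r :: nat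
  defines "Q \<equiv> fps_of_poly (\<Sum>i=1..r. monom (\<rho> i) i)"
  shows "(A * (fps_binomial a oo Q)) $ p = (\<Sum>k=0..p. (a gchoose k) * (\<Sum>ks\<in>compositions r k.
    (if weight r ks \<le> p then A $ (p - weight r ks) else 0) * (multinomial_coeff r ks * (\<Prod>i=1..r. \<rho> i ^ ks i))))"
proof -
  define M where "M ks = multinomial_coeff r ks * (\<Prod>i=1..r. \<rho> i ^ ks i)" for ks
  have Q0: "Q $ 0 = 0"
    by (simp add: Q_def coeff_sum)
  have Q_power: "(Q ^ k) $ j = (\<Sum>ks\<in>compositions r k. if weight r ks = j then M ks else 0)" for k j
    unfolding Q_def fps_of_poly_power[symmetric] power_sum_monom_multinomial M_def
    by (auto simp: coeff_sum intro: sum.cong)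
  have compose: "(fps_binomial a oo Q) $ j = (\<Sum>k=0..p. (a gchoose k) * (Q ^ k) $ j)" if "j \<le> p" for j
  proof -
    have "(fps_binomial a oo Q) $ j = (\<Sum>k=0..j. (a gchoose k) * (Q ^ k) $ j)"
      by (simp add: fps_compose_nth)
    also have "\<dots> = (\<Sum>k=0..p. (a gchoose k) * (Q ^ k) $ j)"
      using that startsby_zero_power_prefix[OF Q0] by (intro sum.mono_neutral_left) auto
    finally show ?thesis .
  qed
  have "(A * (fps_binomial a oo Q)) $ p = (\<Sum>j=0..p. A $ (p - j) * (fps_binomial a oo Q) $ j)"
    unfolding fps_mult_nth by (subst sum.atLeastAtMost_rev) simp
  also have "\<dots> = (\<Sum>j=0..p. \<Sum>k=0..p. \<Sum>ks\<in>compositions r k.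
      (a gchoose k) * (if weight r ks = j then A $ (p - j) * M ks else 0))"
    by (intro sum.cong refl) (simp add: compose Q_power sum_distrib_left mult.left_commute if_distrib cong: if_cong)
  also have "\<dots> = (\<Sum>k=0..p. \<Sum>ks\<in>compositions r k. \<Sum>j=0..p.
      (a gchoose k) * (if weight r ks = j then A $ (p - j) * M ks else 0))"
    by (subst sum.swap) (rule sum.cong[OF refl], rule sum.swap)
  also have "\<dots> = (\<Sum>k=0..p. (a gchoose k) * (\<Sum>ks\<in>compositions r k.
      (if weight r ks \<le> p then A $ (p - weight r ks) else 0) * M ks))"
    by (auto simp: sum.delta sum.delta' simp flip: sum_distrib_left intro!: sum.cong)
  finally show ?thesis
    by (simp only: M_def)
qed

lemma neg_binomial_sum_le_coeff:
  fixes P A D :: "'a::linordered_field poly"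
  assumes P0: "coeff P 0 = 1" and D: "\<forall>i. 0 \<le> coeff D i" and nK: "0 \<le> n + int K"
    and eq: "monom 1 K' * P ^ K * A = P ^ nat (n + int K) * D"
    and g: "\<forall>i. g (int i) = coeff A i" "\<forall>i<0. g i = 0"
  shows "neg_binomial_sum P n g p \<le> coeff A p"
proof -
  define d where "d = degree P"
  define Q where "Q = fps_of_poly (\<Sum>i=1..d. monom (coeff P i) i)"
  define Y where "Y = fps_binomial (of_int (- n)) oo Q" \<comment> \<open>\<open>Y = (1 + Q)\<^bsup>-n\<^esup> = P\<^bsup>-n\<^esup>\<close>\<close>
  have Q0: "Q $ 0 = 0"
    by (simp add: Q_def coeff_sum)
  have "P = (\<Sum>i\<le>d. monom (coeff P i) i)"
    by (simp add: d_def poly_as_sum_of_monoms)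
  also have "\<dots> = 1 + (\<Sum>i=1..d. monom (coeff P i) i)"
    using P0 by (simp add: atMost_atLeast0 sum.atLeast_Suc_atMost one_pCons)
  finally have F: "fps_of_poly P = 1 + Q"
    by (metis Q_def fps_of_poly_1 fps_of_poly_add)
  have "Y * fps_of_poly P ^ nat (n + int K) = (fps_binomial (of_int (- n)) * fps_binomial (of_nat (nat (n + int K)))) oo Q"
    by (simp add: Y_def F fps_binomial_of_nat_compose[OF Q0, symmetric] fps_compose_mult_distrib[OF Q0])
  also have "\<dots> = fps_of_poly P ^ K"
    using nK by (simp add: F fps_binomial_add_mult[symmetric] fps_binomial_of_nat_compose[OF Q0])
  finally have YF: "Y * fps_of_poly P ^ nat (n + int K) = fps_of_poly P ^ K" .
  have "fps_of_poly P ^ K * (fps_X ^ K' * (fps_of_poly A * Y)) = fps_of_poly (monom 1 K' * P ^ K * A) * Y"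
    by (simp add: fps_of_poly_mult fps_of_poly_power fps_of_poly_monom' ac_simps)
  also have "\<dots> = (Y * fps_of_poly P ^ nat (n + int K)) * fps_of_poly D"
    unfolding eq by (simp add: fps_of_poly_mult fps_of_poly_power ac_simps)
  also have "\<dots> = fps_of_poly P ^ K * fps_of_poly D"
    by (simp only: YF)
  finally have "fps_X ^ K' * (fps_of_poly A * Y) = fps_of_poly D"
    using P0 fps_of_poly_eq_iff[of P 0] by auto
  then have "coeff D (p + K') = (fps_of_poly A * Y) $ p"
    using fps_X_power_mult_nth[of K' "fps_of_poly A * Y" "p + K'"] by simp
  then have "0 \<le> (fps_of_poly A * Y) $ p"
    using D by metis
  also have "(fps_of_poly A * Y) $ p = (\<Sum>k=0..p. (of_int (- n) gchoose k) * (\<Sum>ks\<in>compositions d k.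
      (if weight d ks \<le> p then coeff A (p - weight d ks) else 0)
      * (multinomial_coeff d ks * (\<Prod>i=1..d. coeff P i ^ ks i))))"
    unfolding Y_def Q_def coeff_mult_binomial_compose by (simp cong: if_cong)
  also have "\<dots> = g (int p) - neg_binomial_sum P n g p"
  proof -
    have gw: "g (int p - int w) = (if w \<le> p then coeff A (p - w) else 0)" for w
      using g by (cases "w \<le> p") (auto simp flip: of_nat_diff)
    show ?thesis
      by (simp only: neg_binomial_sum_eq d_def[symmetric] gw)
  qed
  finally show ?thesis
    using g by simp
qed

lemma neg_binomial_sum_le_of_eq_sums:
  fixes P :: "'a::linordered_field poly" and c :: "nat \<Rightarrow> 'a" and f :: "'b \<Rightarrow> 'a"
  assumes P0: "coeff P 0 = 1" and aK: "a \<le> int K" and nK: "0 \<le> n + int K"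
    and fin: "finite {i. c i \<noteq> 0}" and f: "\<forall>s\<in>S. 0 \<le> f s"
    and eq: "(\<Sum>i | c i \<noteq> 0. smult (c i) (P ^ K * monom 1 (nat (int i - a + int K)))) =
             (\<Sum>s\<in>S. smult (f s) (P ^ nat (n + int K) * monom 1 (y s)))"
  shows "neg_binomial_sum P n (\<lambda>i. if i < 0 then 0 else c (nat i)) p \<le> c p"
proof -
  define A where "A = (\<Sum>i | c i \<noteq> 0. monom (c i) i)"
  define D where "D = (\<Sum>s\<in>S. monom (f s) (y s))"
  have "monom 1 (nat (int K - a)) * P ^ K * A = (\<Sum>i | c i \<noteq> 0. smult (c i) (P ^ K * monom 1 (nat (int i - a + int K))))"
    unfolding A_def sum_distrib_left
  proof (rule sum.cong[OF refl])
    fix i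
    have "nat (int i - a + int K) = i + nat (int K - a)"
      using aK by simp
    then show "monom 1 (nat (int K - a)) * P ^ K * monom (c i) i = smult (c i) (P ^ K * monom 1 (nat (int i - a + int K)))"
      by (simp add: mult_monom smult_monom mult_ac flip: mult_smult_right)
  qed
  also have "\<dots> = P ^ nat (n + int K) * D"
    unfolding eq D_def sum_distrib_left by (simp add: smult_monom flip: mult_smult_right)
  finally have "monom 1 (nat (int K - a)) * P ^ K * A = P ^ nat (n + int K) * D" .
  moreover have "coeff A i = c i" for i
    using fin by (simp add: A_def coeff_sum coeff_monom)
  moreover have "\<forall>i. 0 \<le> coeff D i"
    using f by (auto simp: D_def coeff_sum coeff_monom intro!: sum_nonneg)
  ultimately show ?thesis
    using neg_binomial_sum_le_coeff[OF P0 _ nK, of D "nat (int K - a)" A "\<lambda>i. if i < 0 then 0 else c (nat i)"]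
    by simp
qed

section \<open>Products \<open>U(x\<^sub>1) V(x\<^sub>2)\<close> in the rational function field\<close>

text \<open>In \<open>'a poly poly\<close> the inner variable is \<open>x\<^sub>1\<close> and the outer one is \<open>x\<^sub>2\<close>.\<close>

definition tensor_poly :: "'a::comm_semiring_1 poly \<Rightarrow> 'a poly \<Rightarrow> 'a poly poly" where
  "tensor_poly U V = [:U:] * map_poly (\<lambda>a. [:a:]) V"

lemma coeff_tensor_poly: "coeff (tensor_poly U V) n = smult (coeff V n) U"
  by (simp add: tensor_poly_def coeff_map_poly)

lemma coeff_coeff_tensor_poly: "coeff (coeff (tensor_poly U V) n) m = coeff V n * coeff U m"
  by (simp add: coeff_tensor_poly)

lemma tensor_poly_mult: "tensor_poly U V * tensor_poly U' V' = tensor_poly (U * U') (V * V')"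
  by (rule poly_eqI) (simp add: coeff_mult coeff_tensor_poly smult_sum mult_ac)

lemma tensor_poly_1: "tensor_poly 1 1 = 1"
  by (rule poly_eqI) (simp add: coeff_tensor_poly coeff_1)

lemma tensor_poly_add_left: "tensor_poly (U + U') V = tensor_poly U V + tensor_poly U' V"
  by (rule poly_eqI) (simp add: coeff_tensor_poly smult_add_right)

lemma tensor_poly_add_right: "tensor_poly U (V + V') = tensor_poly U V + tensor_poly U V'"
  by (rule poly_eqI) (simp add: coeff_tensor_poly smult_add_left)

lemma tensor_poly_eq_0_iff:
  fixes U V :: "'a::idom poly"
  shows "tensor_poly U V = 0 \<longleftrightarrow> U = 0 \<or> V = 0"
proof
  assume "tensor_poly U V = 0"
  then have "smult (lead_coeff V) U = 0"
    by (metis coeff_0 coeff_tensor_poly)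
  then show "U = 0 \<or> V = 0"
    by auto
qed (auto intro: poly_eqI simp: coeff_tensor_poly)

definition rf_tensor :: "'a::idom poly \<Rightarrow> 'a poly \<Rightarrow> 'a ratfun2" where
  "rf_tensor U V = to_fract (tensor_poly U V)"

lemma rf_tensor_mult: "rf_tensor U V * rf_tensor U' V' = rf_tensor (U * U') (V * V')"
  by (simp add: rf_tensor_def tensor_poly_mult flip: to_fract_mult)

lemma rf_tensor_1: "rf_tensor 1 1 = 1"
  by (simp add: rf_tensor_def tensor_poly_1)

lemma rf_tensor_power: "rf_tensor U V ^ n = rf_tensor (U ^ n) (V ^ n)"
  by (induction n) (simp_all add: rf_tensor_1 rf_tensor_mult)

lemma rf_tensor_add_left: "rf_tensor (U + U') V = rf_tensor U V + rf_tensor U' V"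
  by (simp add: rf_tensor_def tensor_poly_add_left)

lemma rf_tensor_add_right: "rf_tensor U (V + V') = rf_tensor U V + rf_tensor U V'"
  by (simp add: rf_tensor_def tensor_poly_add_right)

lemma rf_tensor_eq_0_iff: "rf_tensor U V = 0 \<longleftrightarrow> U = 0 \<or> V = 0"
  by (simp add: rf_tensor_def tensor_poly_eq_0_iff)

lemma rf_const_eq: "rf_const a = rf_tensor [:a:] 1"
  by (simp add: rf_const_def rf_tensor_def tensor_poly_def to_fract_def)

lemma rf_x1_eq: "rf_x1 = rf_tensor [:0, 1:] 1"
  by (simp add: rf_x1_def rf_tensor_def tensor_poly_def to_fract_def)

lemma rf_x2_eq: "rf_x2 = rf_tensor 1 [:0, 1:]"
  by (simp add: rf_x2_def rf_tensor_def tensor_poly_def to_fract_def map_poly_pCons one_pCons)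

lemma poly_map_rf_const_x1: "poly (map_poly rf_const P) rf_x1 = rf_tensor P 1"
proof (induction P)
  case (pCons a P)
  have "poly (map_poly rf_const (pCons a P)) rf_x1 = rf_const a + rf_x1 * poly (map_poly rf_const P) rf_x1"
    by (simp add: map_poly_pCons rf_const_def Zero_fract_def)
  also have "\<dots> = rf_tensor [:a:] 1 + rf_tensor [:0, 1:] 1 * rf_tensor P 1"
    unfolding pCons.IH by (simp add: rf_const_eq rf_x1_eq)
  also have "\<dots> = rf_tensor (pCons a P) 1"
    by (simp add: rf_tensor_mult flip: rf_tensor_add_left)
  finally show ?case .
qed (simp add: rf_tensor_def tensor_poly_def)

lemma poly_map_rf_const_x2: "poly (map_poly rf_const P) rf_x2 = rf_tensor 1 P"
proof (induction P)
  case (pCons a P)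
  have const: "rf_tensor [:a:] 1 = rf_tensor 1 [:a:]"
    unfolding rf_tensor_def
    by (rule arg_cong[where f = to_fract], rule poly_eqI) (simp add: coeff_tensor_poly coeff_1 coeff_pCons split: nat.split)
  have "poly (map_poly rf_const (pCons a P)) rf_x2 = rf_const a + rf_x2 * poly (map_poly rf_const P) rf_x2"
    by (simp add: map_poly_pCons rf_const_def Zero_fract_def)
  also have "\<dots> = rf_tensor 1 [:a:] + rf_tensor 1 [:0, 1:] * rf_tensor 1 P"
    unfolding pCons.IH by (simp add: rf_const_eq rf_x2_eq const)
  also have "\<dots> = rf_tensor 1 (pCons a P)"
    by (simp add: rf_tensor_mult flip: rf_tensor_add_right)
  finally show ?case .
qed (simp add: rf_tensor_def tensor_poly_def)

lemma xvar_0: "xvar P1 P2 0 = rf_tensor P2 1 / rf_x2"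
  by (simp add: xvar_def clus_seq_def poly_map_rf_const_x1)

lemma xvar_1: "xvar P1 P2 1 = rf_x1"
  by (simp add: xvar_def clus_seq_def)

lemma xvar_2: "xvar P1 P2 2 = rf_x2"
  by (simp add: xvar_def clus_seq_def eval_nat_numeral)

lemma xvar_3: "xvar P1 P2 3 = rf_tensor 1 P1 / rf_x1"
  by (simp add: xvar_def clus_seq_def eval_nat_numeral poly_map_rf_const_x2)

lemma tensor_poly_smult: "tensor_poly (smult a U) V = tensor_poly U (smult a V)"
  by (rule poly_eqI) (simp add: coeff_tensor_poly mult.commute)

lemma coeff_sum_tensor_poly_monom:
  assumes "finite T"
  shows "coeff (\<Sum>t\<in>T. tensor_poly (A t) (monom 1 (d t))) m = (\<Sum>t\<in>{t\<in>T. d t = m}. A t)"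
  using assms by (auto simp: coeff_sum coeff_tensor_poly coeff_monom sum.inter_filter intro!: sum.cong)

lemma map_coeff_sum_tensor_poly_monom:
  assumes "finite T"
  shows "map_poly (\<lambda>u. coeff u m) (\<Sum>t\<in>T. tensor_poly (monom 1 (d t)) (B t)) = (\<Sum>t\<in>{t\<in>T. d t = m}. B t)"
  using assms
  by (intro poly_eqI) (auto simp: coeff_map_poly coeff_sum coeff_tensor_poly coeff_monom sum.inter_filter intro!: sum.cong)

section \<open>Clearing denominators\<close>

definition laurent_monom :: "'a::idom poly \<Rightarrow> 'a poly \<Rightarrow> int \<Rightarrow> int \<Rightarrow> int \<Rightarrow> int \<Rightarrow> 'a ratfun2" where
  "laurent_monom U V \<alpha> \<beta> \<gamma> \<delta> = rf_tensor U 1 powi \<alpha> * rf_x1 powi \<beta> * rf_tensor 1 V powi \<gamma> * rf_x2 powi \<delta>"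

lemma power_int_mult_power:
  fixes z :: "'a::field"
  assumes "z \<noteq> 0" and "0 \<le> m + int K"
  shows "z powi m * z ^ K = z ^ nat (m + int K)"
proof -
  have "z powi m * z ^ K = z powi (m + int K)"
    using assms(1) by (simp add: power_int_add)
  also have "\<dots> = z ^ nat (m + int K)"
    using assms(2) by (metis int_nat_eq power_int_of_nat)
  finally show ?thesis .
qed

lemma rf_tensor_mult_monom:
  "rf_tensor (A * monom 1 m) (B * monom 1 l) = rf_tensor A 1 * rf_x1 ^ m * rf_tensor 1 B * rf_x2 ^ l"
  by (simp add: rf_x1_eq rf_x2_eq rf_tensor_power rf_tensor_mult monom_altdef)

lemma laurent_monom_clear:
  assumes "U \<noteq> 0" "V \<noteq> 0"
    and "0 \<le> \<alpha> + int K" "0 \<le> \<beta> + int K" "0 \<le> \<gamma> + int K" "0 \<le> \<delta> + int K"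
  shows "laurent_monom U V \<alpha> \<beta> \<gamma> \<delta> * rf_tensor (U ^ K * monom 1 K) (V ^ K * monom 1 K) =
    rf_tensor (U ^ nat (\<alpha> + int K) * monom 1 (nat (\<beta> + int K))) (V ^ nat (\<gamma> + int K) * monom 1 (nat (\<delta> + int K)))"
proof -
  have nz: "rf_tensor U 1 \<noteq> 0" "rf_x1 \<noteq> 0" "rf_tensor 1 V \<noteq> 0" "rf_x2 \<noteq> 0"
    using assms(1,2) by (simp_all add: rf_tensor_eq_0_iff rf_x1_eq rf_x2_eq)
  have "rf_tensor (U ^ n) 1 = rf_tensor U 1 ^ n" "rf_tensor 1 (V ^ n) = rf_tensor 1 V ^ n" for n
    by (simp_all add: rf_tensor_power)
  then show ?thesis
    unfolding laurent_monom_def rf_tensor_mult_monom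
    by (simp only: flip: power_int_mult_power[OF nz(1) assms(3)] power_int_mult_power[OF nz(2) assms(4)]
          power_int_mult_power[OF nz(3) assms(5)] power_int_mult_power[OF nz(4) assms(6)])
      (simp add: mult_ac)
qed

lemma sum_laurent_monom_clear:
  assumes "U \<noteq> 0" "V \<noteq> 0"
    and "\<forall>t\<in>S. 0 \<le> \<alpha> t + int K \<and> 0 \<le> \<beta> t + int K \<and> 0 \<le> \<gamma> t + int K \<and> 0 \<le> \<delta> t + int K"
  shows "(\<Sum>t\<in>S. rf_const (f t) * laurent_monom U V (\<alpha> t) (\<beta> t) (\<gamma> t) (\<delta> t))
      * rf_tensor (U ^ K * monom 1 K) (V ^ K * monom 1 K) =
    to_fract (\<Sum>t\<in>S. tensor_poly (smult (f t) (U ^ nat (\<alpha> t + int K) * monom 1 (nat (\<beta> t + int K))))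
      (V ^ nat (\<gamma> t + int K) * monom 1 (nat (\<delta> t + int K))))"
  unfolding sum_distrib_right to_fract_sum
proof (rule sum.cong[OF refl])
  fix t assume "t \<in> S"
  then show "rf_const (f t) * laurent_monom U V (\<alpha> t) (\<beta> t) (\<gamma> t) (\<delta> t) * rf_tensor (U ^ K * monom 1 K) (V ^ K * monom 1 K) =
    to_fract (tensor_poly (smult (f t) (U ^ nat (\<alpha> t + int K) * monom 1 (nat (\<beta> t + int K))))
      (V ^ nat (\<gamma> t + int K) * monom 1 (nat (\<delta> t + int K))))"
    using assms by (simp add: laurent_monom_clear mult.assoc rf_const_eq rf_tensor_mult)
      (simp add: rf_tensor_def)
qed

lemma xvar_0_1_laurent_monom: "xvar P1 P2 0 powi i * xvar P1 P2 1 powi j = laurent_monom P2 1 i j 0 (- i)"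
  by (simp add: xvar_0 xvar_1 laurent_monom_def power_int_divide_distrib power_int_minus_divide mult_ac)

lemma xvar_1_2_laurent_monom: "xvar P1 P2 1 powi i * xvar P1 P2 2 powi j = laurent_monom 1 1 0 i 0 j"
  by (simp add: xvar_1 xvar_2 laurent_monom_def)

lemma xvar_2_3_laurent_monom: "xvar P1 P2 2 powi i * xvar P1 P2 3 powi j = laurent_monom 1 P1 0 (- j) j i"
  by (simp add: xvar_2 xvar_3 laurent_monom_def power_int_divide_distrib power_int_minus_divide mult_ac)

definition pointed_ratfun :: "int \<Rightarrow> int \<Rightarrow> (nat \<Rightarrow> nat \<Rightarrow> 'a::idom) \<Rightarrow> 'a ratfun2" where
  "pointed_ratfun a1 a2 c = rf_x1 powi (- a1) * rf_x2 powi (- a2) *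
     (\<Sum>(p, q)\<in>{(p, q). c p q \<noteq> 0}. rf_const (c p q) * rf_x1 ^ p * rf_x2 ^ q)"

lemma pointed_ratfun_laurent_monom:
  "pointed_ratfun a1 a2 c = (\<Sum>t\<in>{(p, q). c p q \<noteq> 0}.
     rf_const (c (fst t) (snd t)) * laurent_monom U V 0 (int (fst t) - a1) 0 (int (snd t) - a2))"
proof -
  have nz: "rf_x1 \<noteq> 0" "rf_x2 \<noteq> 0"
    by (simp_all add: rf_tensor_eq_0_iff rf_x1_eq rf_x2_eq)
  have "z powi (int n - a) = z ^ n * z powi (- a)" if "z \<noteq> 0" for z :: "'a ratfun2" and n a
    using that power_int_add[of z "int n" "- a"] by simp
  then show ?thesis
    unfolding pointed_ratfun_def sum_distrib_left
    by (intro sum.cong) (auto simp: laurent_monom_def nz mult_ac)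
qed

lemma in_laurent_bounded:
  assumes "in_laurent P1 P2 R k x"
  obtains f S K where "finite S" "\<forall>s\<in>S. f s \<in> R" "M \<le> int K" "\<forall>s\<in>S. \<bar>fst s\<bar> \<le> int K \<and> \<bar>snd s\<bar> \<le> int K"
    "x = (\<Sum>s\<in>S. rf_const (f s) * xvar P1 P2 k powi fst s * xvar P1 P2 (k + 1) powi snd s)"
proof -
  obtain f where fin: "finite {e. f e \<noteq> 0}" and R: "\<forall>e. f e \<in> R"
    and x: "x = (\<Sum>(i, j)\<in>{e. f e \<noteq> 0}. rf_const (f (i, j)) * xvar P1 P2 k powi i * xvar P1 P2 (k + 1) powi j)"
    using assms unfolding in_laurent_def by blast
  define S where "S = {e. f e \<noteq> 0}"
  define K where "K = nat (\<bar>M\<bar> + (\<Sum>s\<in>S. \<bar>fst s\<bar> + \<bar>snd s\<bar>))"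
  have "\<bar>fst s\<bar> + \<bar>snd s\<bar> \<le> (\<Sum>s\<in>S. \<bar>fst s\<bar> + \<bar>snd s\<bar>)" if "s \<in> S" for s
    using fin that by (intro member_le_sum) (auto simp: S_def)
  moreover have "0 \<le> (\<Sum>s\<in>S. \<bar>fst s\<bar> + \<bar>snd s\<bar>)"
    by (intro sum_nonneg) simp
  ultimately have "M \<le> int K" "\<forall>s\<in>S. \<bar>fst s\<bar> \<le> int K \<and> \<bar>snd s\<bar> \<le> int K"
    by (force simp: K_def)+
  with fin R x show ?thesis
    by (intro that[of S f K]) (auto simp: S_def split_def)
qed

lemma pointed_ratfun_clear:
  assumes "U \<noteq> 0" "V \<noteq> 0" "a1 \<le> int K" "a2 \<le> int K"
  shows "pointed_ratfun a1 a2 c * rf_tensor (U ^ K * monom 1 K) (V ^ K * monom 1 K) =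
    to_fract (\<Sum>t\<in>{(p, q). c p q \<noteq> 0}. tensor_poly
      (smult (c (fst t) (snd t)) (U ^ K * monom 1 (nat (int (fst t) - a1 + int K))))
      (V ^ K * monom 1 (nat (int (snd t) - a2 + int K))))"
  using sum_laurent_monom_clear[OF assms(1,2), of "{(p, q). c p q \<noteq> 0}" "\<lambda>_. 0" K
      "\<lambda>t. int (fst t) - a1" "\<lambda>_. 0" "\<lambda>t. int (snd t) - a2" "\<lambda>t. c (fst t) (snd t)"] assms(3,4)
  by (simp add: pointed_ratfun_laurent_monom[of _ _ _ U V])

lemma in_laurent_0_cleared:
  fixes c :: "nat \<Rightarrow> nat \<Rightarrow> 'a::linordered_field"
  assumes P2: "P2 \<noteq> 0" and "in_laurent P1 P2 R 0 (pointed_ratfun a1 a2 c)"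
  obtains K :: nat and S :: "(int \<times> int) set" and f :: "int \<times> int \<Rightarrow> 'a"
  where "M \<le> int K" "a1 \<le> int K" "a2 \<le> int K" "finite S" "\<forall>s\<in>S. f s \<in> R"
    "\<forall>s\<in>S. \<bar>fst s\<bar> \<le> int K \<and> \<bar>snd s\<bar> \<le> int K"
    "(\<Sum>t\<in>{(p, q). c p q \<noteq> 0}.
      tensor_poly (smult (c (fst t) (snd t)) (P2 ^ K * monom 1 (nat (int (fst t) - a1 + int K))))
        (monom 1 (nat (int (snd t) - a2 + int K)))) =
     (\<Sum>s\<in>S. tensor_poly (smult (f s) (P2 ^ nat (fst s + int K) * monom 1 (nat (snd s + int K))))
        (monom 1 (nat (- fst s + int K))))"
proof -
  obtain f S K where S: "finite S" "\<forall>s\<in>S. f s \<in> R"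
    and K: "\<bar>M\<bar> + \<bar>a1\<bar> + \<bar>a2\<bar> \<le> int K" "\<forall>s\<in>S. \<bar>fst s\<bar> \<le> int K \<and> \<bar>snd s\<bar> \<le> int K"
    and x: "pointed_ratfun a1 a2 c = (\<Sum>s\<in>S. rf_const (f s) * xvar P1 P2 0 powi fst s * xvar P1 P2 (0 + 1) powi snd s)"
    by (rule in_laurent_bounded[OF assms(2)])
  have Kb: "\<forall>s\<in>S. 0 \<le> fst s + int K \<and> 0 \<le> snd s + int K \<and> 0 \<le> - fst s + int K"
    using K(2) by auto
  define clear where "clear = rf_tensor (P2 ^ K * monom 1 K) (1 ^ K * monom 1 K)"
  have "pointed_ratfun a1 a2 c * clear = to_fract (\<Sum>t\<in>{(p, q). c p q \<noteq> 0}.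
      tensor_poly (smult (c (fst t) (snd t)) (P2 ^ K * monom 1 (nat (int (fst t) - a1 + int K))))
        (monom 1 (nat (int (snd t) - a2 + int K))))"
    using pointed_ratfun_clear[OF P2, of 1 a1 K a2 c] K(1) by (simp add: clear_def)
  moreover have "pointed_ratfun a1 a2 c * clear = to_fract (\<Sum>s\<in>S. tensor_poly (smult (f s) (P2 ^ nat (fst s + int K) * monom 1 (nat (snd s + int K))))
        (monom 1 (nat (- fst s + int K))))"
    using sum_laurent_monom_clear[OF P2, of 1 S fst K snd "\<lambda>_. 0" "\<lambda>s. - fst s" f] Kb
    by (simp add: clear_def x mult.assoc xvar_0_1_laurent_monom)
  ultimately show ?thesis
    using K S by (intro that[of K S f]) (auto simp del: to_fract_sum)
qed

lemma in_laurent_1_cleared: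
  fixes c :: "nat \<Rightarrow> nat \<Rightarrow> 'a::linordered_field"
  assumes "in_laurent P1 P2 R 1 (pointed_ratfun a1 a2 c)"
  obtains K :: nat and S :: "(int \<times> int) set" and f :: "int \<times> int \<Rightarrow> 'a"
  where "M \<le> int K" "a1 \<le> int K" "a2 \<le> int K" "finite S" "\<forall>s\<in>S. f s \<in> R"
    "\<forall>s\<in>S. \<bar>fst s\<bar> \<le> int K \<and> \<bar>snd s\<bar> \<le> int K"
    "(\<Sum>t\<in>{(p, q). c p q \<noteq> 0}.
      tensor_poly (smult (c (fst t) (snd t)) (monom 1 (nat (int (fst t) - a1 + int K))))
        (monom 1 (nat (int (snd t) - a2 + int K)))) =
     (\<Sum>s\<in>S. tensor_poly (smult (f s) (monom 1 (nat (fst s + int K)))) (monom 1 (nat (snd s + int K))))"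
proof -
  obtain f S K where S: "finite S" "\<forall>s\<in>S. f s \<in> R"
    and K: "\<bar>M\<bar> + \<bar>a1\<bar> + \<bar>a2\<bar> \<le> int K" "\<forall>s\<in>S. \<bar>fst s\<bar> \<le> int K \<and> \<bar>snd s\<bar> \<le> int K"
    and x: "pointed_ratfun a1 a2 c = (\<Sum>s\<in>S. rf_const (f s) * xvar P1 P2 1 powi fst s * xvar P1 P2 (1 + 1) powi snd s)"
    by (rule in_laurent_bounded[OF assms(1)])
  have Kb: "\<forall>s\<in>S. 0 \<le> fst s + int K \<and> 0 \<le> snd s + int K"
    using K(2) by auto
  define clear where "clear = rf_tensor (1 ^ K * monom 1 K) (1 ^ K * monom 1 K :: 'a poly)"
  have "pointed_ratfun a1 a2 c * clear = to_fract (\<Sum>t\<in>{(p, q). c p q \<noteq> 0}.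
      tensor_poly (smult (c (fst t) (snd t)) (monom 1 (nat (int (fst t) - a1 + int K))))
        (monom 1 (nat (int (snd t) - a2 + int K))))"
    using pointed_ratfun_clear[of 1 1 a1 K a2 c] K(1) by (simp add: clear_def)
  moreover have "pointed_ratfun a1 a2 c * clear = to_fract (\<Sum>s\<in>S. tensor_poly (smult (f s) (monom 1 (nat (fst s + int K)))) (monom 1 (nat (snd s + int K))))"
    using sum_laurent_monom_clear[of 1 1 S "\<lambda>_. 0" K fst "\<lambda>_. 0" snd f] Kb
    by (simp add: clear_def x mult.assoc xvar_1_2_laurent_monom)
  ultimately show ?thesis
    using K S by (intro that[of K S f]) (auto simp del: to_fract_sum)
qed

lemma in_laurent_2_cleared:
  fixes c :: "nat \<Rightarrow> nat \<Rightarrow> 'a::linordered_field"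
  assumes P1: "P1 \<noteq> 0" and "in_laurent P1 P2 R 2 (pointed_ratfun a1 a2 c)"
  obtains K :: nat and S :: "(int \<times> int) set" and f :: "int \<times> int \<Rightarrow> 'a"
  where "M \<le> int K" "a1 \<le> int K" "a2 \<le> int K" "finite S" "\<forall>s\<in>S. f s \<in> R"
    "\<forall>s\<in>S. \<bar>fst s\<bar> \<le> int K \<and> \<bar>snd s\<bar> \<le> int K"
    "(\<Sum>t\<in>{(p, q). c p q \<noteq> 0}.
      tensor_poly (monom 1 (nat (int (fst t) - a1 + int K)))
        (smult (c (fst t) (snd t)) (P1 ^ K * monom 1 (nat (int (snd t) - a2 + int K))))) =
     (\<Sum>s\<in>S. tensor_poly (monom 1 (nat (- snd s + int K)))
        (smult (f s) (P1 ^ nat (snd s + int K) * monom 1 (nat (fst s + int K)))))"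
proof -
  obtain f S K where S: "finite S" "\<forall>s\<in>S. f s \<in> R"
    and K: "\<bar>M\<bar> + \<bar>a1\<bar> + \<bar>a2\<bar> \<le> int K" "\<forall>s\<in>S. \<bar>fst s\<bar> \<le> int K \<and> \<bar>snd s\<bar> \<le> int K"
    and x: "pointed_ratfun a1 a2 c = (\<Sum>s\<in>S. rf_const (f s) * xvar P1 P2 2 powi fst s * xvar P1 P2 (2 + 1) powi snd s)"
    by (rule in_laurent_bounded[OF assms(2)])
  have Kb: "\<forall>s\<in>S. 0 \<le> fst s + int K \<and> 0 \<le> snd s + int K \<and> 0 \<le> - snd s + int K"
    using K(2) by auto
  define clear where "clear = rf_tensor (1 ^ K * monom 1 K) (P1 ^ K * monom 1 K)"
  have "pointed_ratfun a1 a2 c * clear = to_fract (\<Sum>t\<in>{(p, q). c p q \<noteq> 0}.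
      tensor_poly (monom 1 (nat (int (fst t) - a1 + int K)))
        (smult (c (fst t) (snd t)) (P1 ^ K * monom 1 (nat (int (snd t) - a2 + int K)))))"
    using pointed_ratfun_clear[OF _ P1, of 1 a1 K a2 c] K(1) by (simp add: clear_def tensor_poly_smult)
  moreover have "pointed_ratfun a1 a2 c * clear = to_fract (\<Sum>s\<in>S. tensor_poly (monom 1 (nat (- snd s + int K)))
        (smult (f s) (P1 ^ nat (snd s + int K) * monom 1 (nat (fst s + int K)))))"
    using sum_laurent_monom_clear[OF _ P1, of 1 S "\<lambda>_. 0" K "\<lambda>s. - snd s" snd fst f] Kb
    by (simp add: clear_def x mult.assoc xvar_2_3_laurent_monom tensor_poly_smult)
  ultimately show ?thesis
    using K S by (intro that[of K S f]) (auto simp del: to_fract_sum)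
qed

section \<open>Comparing coefficients\<close>

lemma sum_support_row:
  "(\<Sum>t\<in>{t\<in>{(p, q). c p q \<noteq> 0}. snd t = q}. h t) = (\<Sum>i | c i q \<noteq> 0. h (i, q))"
  by (rule sum.reindex_bij_witness[of _ "\<lambda>i. (i, q)" fst]) auto

lemma sum_support_column:
  "(\<Sum>t\<in>{t\<in>{(p, q). c p q \<noteq> 0}. fst t = p}. h t) = (\<Sum>j | c p j \<noteq> 0. h (p, j))"
  by (rule sum.reindex_bij_witness[of _ "\<lambda>j. (p, j)" snd]) auto

lemma coeff_nonneg_if_in_laurent_1:
  fixes c :: "nat \<Rightarrow> nat \<Rightarrow> 'a::linordered_field"
  assumes fin: "finite {(p, q). c p q \<noteq> 0}"
    and T1: "in_laurent P1 P2 R 1 (pointed_ratfun a1 a2 c)" and R: "\<forall>r\<in>R. 0 \<le> r"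
  shows "0 \<le> c p q"
proof -
  obtain K S f where K: "0 \<le> int K" "a1 \<le> int K" "a2 \<le> int K" and S: "finite S" "\<forall>s\<in>S. f s \<in> R"
    and eq: "(\<Sum>t\<in>{(p, q). c p q \<noteq> 0}.
      tensor_poly (smult (c (fst t) (snd t)) (monom 1 (nat (int (fst t) - a1 + int K))))
        (monom 1 (nat (int (snd t) - a2 + int K)))) =
    (\<Sum>s\<in>S. tensor_poly (smult (f s) (monom 1 (nat (fst s + int K)))) (monom 1 (nat (snd s + int K))))"
    by (rule in_laurent_1_cleared[OF T1])
  define m1 where "m1 = nat (int p - a1 + int K)"
  define m2 where "m2 = nat (int q - a2 + int K)"
  have "coeff (coeff (\<Sum>t\<in>{(p, q). c p q \<noteq> 0}.
      tensor_poly (smult (c (fst t) (snd t)) (monom 1 (nat (int (fst t) - a1 + int K))))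
        (monom 1 (nat (int (snd t) - a2 + int K)))) m2) m1 = (\<Sum>t\<in>{(p, q). c p q \<noteq> 0}. if t = (p, q) then c p q else 0)"
    unfolding coeff_sum coeff_coeff_tensor_poly
    using K by (intro sum.cong) (auto simp: m1_def m2_def coeff_monom)
  also have "\<dots> = c p q"
    using fin by auto
  finally have "c p q = coeff (coeff (\<Sum>s\<in>S. tensor_poly (smult (f s) (monom 1 (nat (fst s + int K)))) (monom 1 (nat (snd s + int K)))) m2) m1"
    by (simp only: eq)
  also have "\<dots> \<ge> 0"
    using S R unfolding coeff_sum coeff_coeff_tensor_poly by (intro sum_nonneg) (simp add: coeff_monom)
  finally show ?thesis .
qed

lemma in_laurent_0_row_identity:
  fixes c :: "nat \<Rightarrow> nat \<Rightarrow> 'a::linordered_field"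
  assumes P2: "P2 \<noteq> 0" and fin: "finite {(p, q). c p q \<noteq> 0}"
    and T0: "in_laurent P1 P2 R 0 (pointed_ratfun a1 a2 c)"
  obtains K :: nat and S :: "(int \<times> int) set" and f :: "int \<times> int \<Rightarrow> 'a" and y :: "int \<times> int \<Rightarrow> nat"
  where "a1 \<le> int K" "0 \<le> a2 - int q + int K" "\<forall>s\<in>S. f s \<in> R"
    "(\<Sum>i | c i q \<noteq> 0. smult (c i q) (P2 ^ K * monom 1 (nat (int i - a1 + int K)))) =
     (\<Sum>s\<in>S. smult (f s) (P2 ^ nat (a2 - int q + int K) * monom 1 (y s)))"
proof -
  obtain K S f where K: "\<bar>a2\<bar> + int q \<le> int K" "a1 \<le> int K" "a2 \<le> int K"
    and S: "finite S" "\<forall>s\<in>S. f s \<in> R" "\<forall>s\<in>S. \<bar>fst s\<bar> \<le> int K \<and> \<bar>snd s\<bar> \<le> int K"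
    and eq: "(\<Sum>t\<in>{(p, q). c p q \<noteq> 0}.
      tensor_poly (smult (c (fst t) (snd t)) (P2 ^ K * monom 1 (nat (int (fst t) - a1 + int K))))
        (monom 1 (nat (int (snd t) - a2 + int K)))) =
    (\<Sum>s\<in>S. tensor_poly (smult (f s) (P2 ^ nat (fst s + int K) * monom 1 (nat (snd s + int K))))
        (monom 1 (nat (- fst s + int K))))"
    by (rule in_laurent_0_cleared[OF P2 T0])
  define m where "m = nat (int q - a2 + int K)" \<comment> \<open>exponent of \<open>x\<^sub>2\<^bsup>q - a\<^sub>2\<^esup>\<close> after clearing\<close>
  have "{t\<in>{(p, q). c p q \<noteq> 0}. nat (int (snd t) - a2 + int K) = m} = {t\<in>{(p, q). c p q \<noteq> 0}. snd t = q}"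
    using K by (auto simp: m_def)
  moreover have "{s\<in>S. nat (- fst s + int K) = m} = {s\<in>S. fst s = a2 - int q}"
    using K S(3) by (auto simp: m_def)
  ultimately have "(\<Sum>t\<in>{t\<in>{(p, q). c p q \<noteq> 0}. snd t = q}.
      smult (c (fst t) (snd t)) (P2 ^ K * monom 1 (nat (int (fst t) - a1 + int K)))) =
    (\<Sum>s\<in>{s\<in>S. fst s = a2 - int q}. smult (f s) (P2 ^ nat (fst s + int K) * monom 1 (nat (snd s + int K))))"
    using arg_cong[OF eq, of "\<lambda>F. coeff F m"]
    by (simp only: coeff_sum_tensor_poly_monom[OF fin] coeff_sum_tensor_poly_monom[OF S(1)])
  also have "\<dots> = (\<Sum>s\<in>{s\<in>S. fst s = a2 - int q}. smult (f s) (P2 ^ nat (a2 - int q + int K) * monom 1 (nat (snd s + int K))))"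
    by (rule sum.cong) auto
  finally show ?thesis
    using K S(2) unfolding sum_support_row
    by (intro that[where K = K and f = f and S = "{s\<in>S. fst s = a2 - int q}" and y = "\<lambda>s. nat (snd s + int K)"]) auto
qed

lemma in_laurent_2_column_identity:
  fixes c :: "nat \<Rightarrow> nat \<Rightarrow> 'a::linordered_field"
  assumes P1: "P1 \<noteq> 0" and fin: "finite {(p, q). c p q \<noteq> 0}"
    and T2: "in_laurent P1 P2 R 2 (pointed_ratfun a1 a2 c)"
  obtains K :: nat and S :: "(int \<times> int) set" and f :: "int \<times> int \<Rightarrow> 'a" and y :: "int \<times> int \<Rightarrow> nat"
  where "a2 \<le> int K" "0 \<le> a1 - int p + int K" "\<forall>s\<in>S. f s \<in> R"
    "(\<Sum>j | c p j \<noteq> 0. smult (c p j) (P1 ^ K * monom 1 (nat (int j - a2 + int K)))) =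
     (\<Sum>s\<in>S. smult (f s) (P1 ^ nat (a1 - int p + int K) * monom 1 (y s)))"
proof -
  obtain K S f where K: "\<bar>a1\<bar> + int p \<le> int K" "a1 \<le> int K" "a2 \<le> int K"
    and S: "finite S" "\<forall>s\<in>S. f s \<in> R" "\<forall>s\<in>S. \<bar>fst s\<bar> \<le> int K \<and> \<bar>snd s\<bar> \<le> int K"
    and eq: "(\<Sum>t\<in>{(p, q). c p q \<noteq> 0}.
      tensor_poly (monom 1 (nat (int (fst t) - a1 + int K)))
        (smult (c (fst t) (snd t)) (P1 ^ K * monom 1 (nat (int (snd t) - a2 + int K))))) =
    (\<Sum>s\<in>S. tensor_poly (monom 1 (nat (- snd s + int K)))
        (smult (f s) (P1 ^ nat (snd s + int K) * monom 1 (nat (fst s + int K)))))"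
    by (rule in_laurent_2_cleared[OF P1 T2])
  define m where "m = nat (int p - a1 + int K)" \<comment> \<open>exponent of \<open>x\<^sub>1\<^bsup>p - a\<^sub>1\<^esup>\<close> after clearing\<close>
  have "{t\<in>{(p, q). c p q \<noteq> 0}. nat (int (fst t) - a1 + int K) = m} = {t\<in>{(p, q). c p q \<noteq> 0}. fst t = p}"
    using K by (auto simp: m_def)
  moreover have "{s\<in>S. nat (- snd s + int K) = m} = {s\<in>S. snd s = a1 - int p}"
    using K S(3) by (auto simp: m_def)
  ultimately have "(\<Sum>t\<in>{t\<in>{(p, q). c p q \<noteq> 0}. fst t = p}.
      smult (c (fst t) (snd t)) (P1 ^ K * monom 1 (nat (int (snd t) - a2 + int K)))) =
    (\<Sum>s\<in>{s\<in>S. snd s = a1 - int p}. smult (f s) (P1 ^ nat (snd s + int K) * monom 1 (nat (fst s + int K))))"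
    using arg_cong[OF eq, of "map_poly (\<lambda>u. coeff u m)"]
    by (simp only: map_coeff_sum_tensor_poly_monom[OF fin] map_coeff_sum_tensor_poly_monom[OF S(1)])
  also have "\<dots> = (\<Sum>s\<in>{s\<in>S. snd s = a1 - int p}. smult (f s) (P1 ^ nat (a1 - int p + int K) * monom 1 (nat (fst s + int K))))"
    by (rule sum.cong) auto
  finally show ?thesis
    using K S(2) unfolding sum_support_column
    by (intro that[where K = K and f = f and S = "{s\<in>S. snd s = a1 - int p}" and y = "\<lambda>s. nat (fst s + int K)"]) auto
qed

lemma finite_support_row: "finite {(p, q). c p q \<noteq> 0} \<Longrightarrow> finite {i. c i q \<noteq> 0}"
  by (rule finite_subset[of _ "fst ` {(p, q). c p q \<noteq> 0}"]) force+

lemma finite_support_column: "finite {(p, q). c p q \<noteq> 0} \<Longrightarrow> finite {j. c p j \<noteq> 0}"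
  by (rule finite_subset[of _ "snd ` {(p, q). c p q \<noteq> 0}"]) force+

lemma neg_binomial_sum_le_if_in_laurent_0:
  fixes c :: "nat \<Rightarrow> nat \<Rightarrow> 'a::linordered_field"
  assumes P2: "coeff P2 0 = 1" and fin: "finite {(p, q). c p q \<noteq> 0}"
    and T0: "in_laurent P1 P2 R 0 (pointed_ratfun a1 a2 c)" and R: "\<forall>r\<in>R. 0 \<le> r"
  shows "neg_binomial_sum P2 (a2 - int q) (\<lambda>i. cext c i (int q)) p \<le> c p q"
proof -
  have "P2 \<noteq> 0"
    using P2 by auto
  then obtain K and S :: "(int \<times> int) set" and f y where K: "a1 \<le> int K" "0 \<le> a2 - int q + int K" and f: "\<forall>s\<in>S. f s \<in> R"
    and eq: "(\<Sum>i | c i q \<noteq> 0. smult (c i q) (P2 ^ K * monom 1 (nat (int i - a1 + int K)))) =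
      (\<Sum>s\<in>S. smult (f s) (P2 ^ nat (a2 - int q + int K) * monom 1 (y s)))"
    by (rule in_laurent_0_row_identity[OF _ fin T0])
  have "neg_binomial_sum P2 (a2 - int q) (\<lambda>i. if i < 0 then 0 else c (nat i) q) p \<le> c p q"
    using neg_binomial_sum_le_of_eq_sums[OF P2 K finite_support_row[OF fin] _ eq] f R by blast
  then show ?thesis
    by (simp add: cext_def cong: if_cong)
qed

lemma neg_binomial_sum_le_if_in_laurent_2:
  fixes c :: "nat \<Rightarrow> nat \<Rightarrow> 'a::linordered_field"
  assumes P1: "coeff P1 0 = 1" and fin: "finite {(p, q). c p q \<noteq> 0}"
    and T2: "in_laurent P1 P2 R 2 (pointed_ratfun a1 a2 c)" and R: "\<forall>r\<in>R. 0 \<le> r"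
  shows "neg_binomial_sum P1 (a1 - int p) (\<lambda>j. cext c (int p) j) q \<le> c p q"
proof -
  have "P1 \<noteq> 0"
    using P1 by auto
  then obtain K and S :: "(int \<times> int) set" and f y where K: "a2 \<le> int K" "0 \<le> a1 - int p + int K" and f: "\<forall>s\<in>S. f s \<in> R"
    and eq: "(\<Sum>j | c p j \<noteq> 0. smult (c p j) (P1 ^ K * monom 1 (nat (int j - a2 + int K)))) =
      (\<Sum>s\<in>S. smult (f s) (P1 ^ nat (a1 - int p + int K) * monom 1 (y s)))"
    by (rule in_laurent_2_column_identity[OF _ fin T2])
  have "neg_binomial_sum P1 (a1 - int p) (\<lambda>j. if j < 0 then 0 else c p (nat j)) q \<le> c p q"
    using neg_binomial_sum_le_of_eq_sums[OF P1 K finite_support_column[OF fin] _ eq] f R by blast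
  then show ?thesis
    by (simp add: cext_def cong: if_cong)
qed

lemma monic_palindromic_pos_coeff_0:
  assumes "monic_palindromic_pos P"
  shows "coeff P 0 = 1"
  using assms by (auto simp: monic_palindromic_pos_def)

theorem proposition2p10:
  fixes P1 P2 :: "'a::linordered_field poly"
    and a1 a2 :: int
    and c :: "nat \<Rightarrow> nat \<Rightarrow> 'a"
    and x :: "'a ratfun2"
  assumes P1: "monic_palindromic_pos P1"
    and P2: "monic_palindromic_pos P2"
    and c_fin: "finite {(p, q). c p q \<noteq> 0}"
    and c_in: "\<forall>p q. c p q \<in> coeff_alg P1 P2"
    and c00: "c 0 0 = 1"
    and x_def: "x = rf_x1 powi (- a1) * rf_x2 powi (- a2) *
                    (\<Sum>(p, q)\<in>{(p, q). c p q \<noteq> 0}. rf_const (c p q) * rf_x1 ^ p * rf_x2 ^ q)"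
    and T0: "in_laurent P1 P2 (coeff_alg_nonneg P1 P2) 0 x"
    and T1: "in_laurent P1 P2 (coeff_alg_nonneg P1 P2) 1 x"
    and T2: "in_laurent P1 P2 (coeff_alg_nonneg P1 P2) 2 x"
  shows "\<forall>p q. c p q \<ge> max
     (pos_part (\<Sum>k=1..p. \<Sum>ks\<in>compositions (degree P2) k.
        (-1) ^ (k - 1) * cext c (int p - int (\<Sum>i=1..degree P2. i * ks i)) (int q)
        * (\<Prod>i=1..degree P2. coeff P2 i ^ ks i)
        * multinom (a2 - int q + int k - 1) (degree P2) ks))
     (pos_part (\<Sum>l=1..q. \<Sum>ls\<in>compositions (degree P1) l.
        (-1) ^ (l - 1) * cext c (int p) (int q - int (\<Sum>i=1..degree P1. i * ls i))
        * (\<Prod>i=1..degree P1. coeff P1 i ^ ls i)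
        * multinom (a1 - int p + int l - 1) (degree P1) ls))"
proof -
  have x: "x = pointed_ratfun a1 a2 c"
    by (simp add: x_def pointed_ratfun_def)
  have R: "\<forall>r\<in>coeff_alg_nonneg P1 P2. 0 \<le> r"
    by (simp add: coeff_alg_nonneg_def)
  note P10 = monic_palindromic_pos_coeff_0[OF P1] and P20 = monic_palindromic_pos_coeff_0[OF P2]
  have "max (pos_part (neg_binomial_sum P2 (a2 - int q) (\<lambda>i. cext c i (int q)) p))
      (pos_part (neg_binomial_sum P1 (a1 - int p) (\<lambda>j. cext c (int p) j) q)) \<le> c p q" for p q
    using coeff_nonneg_if_in_laurent_1[OF c_fin T1[unfolded x] R]
      neg_binomial_sum_le_if_in_laurent_0[OF P20 c_fin T0[unfolded x] R]
      neg_binomial_sum_le_if_in_laurent_2[OF P10 c_fin T2[unfolded x] R]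
    by (simp add: pos_part_def)
  then show ?thesis
    unfolding neg_binomial_sum_def weight_def by blast
qed

end
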